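(* For $n\ge0$ let $$P_n(z)=\frac{\imath^n}{2^n}\sum_{k=0}^n\binom{n}{k}\left(-\imath z+\tfrac12-k\right)_n$$ (the polynomial associated to the Weyl ordering $a_{n,k}=2^{-n}\binom nk$). Then, as polynomials in $z$, $$P_n(z)=\frac{n!}{(2\imath)^n}\,{}_3F_2\!\left(\begin{matrix}-n,\ n+1,\ \tfrac14-\tfrac{\imath z}{2}\\ \tfrac12,\ 1\end{matrix}\,\Big|\,1\right).$$
   Context: $\imath=\sqrt{-1}$; $(x)_n=x(x+1)\cdots(x+n-1)$. ${}_3F_2\!\left(\begin{smallmatrix}a_1,a_2,a_3\\ b_1,b_2\end{smallmatrix}\big|x\right)=\sum_{k\ge0}\frac{(a_1)_k(a_2)_k(a_3)_k}{(b_1)_k(b_2)_k}\frac{x^k}{k!}$ (a terminating sum here since $a_1=-n$). *)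

theory Defs
  imports Complex_Main
begin

text \<open>Generalized hypergeometric series 3F2 (formal sum over all k; it terminates
  when a1 is a non-positive integer, as in the application).\<close>
definition hyp3F2 :: "complex \<Rightarrow> complex \<Rightarrow> complex \<Rightarrow> complex \<Rightarrow> complex \<Rightarrow> complex \<Rightarrow> complex" where
  "hyp3F2 a1 a2 a3 b1 b2 x =
     (\<Sum>k. pochhammer a1 k * pochhammer a2 k * pochhammer a3 k
           / (pochhammer b1 k * pochhammer b2 k) * x ^ k / of_nat (fact k))"

definition P_weyl :: "nat \<Rightarrow> complex \<Rightarrow> complex" where
  "P_weyl n z = \<i> ^ n / 2 ^ n *
     (\<Sum>k=0..n. of_nat (n choose k) * pochhammer (- \<i> * z + 1/2 - of_nat k) n)"

end

theory Submission
  imports Defs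
begin

text \<open>
  Up to the factor \<open>(\<i>/2)^n\<close>, \<open>P_n\<close> is \<open>L_n(x) = \<Sum>\<^sub>k C(n,k) (x - k)\<^sub>n\<close> at
  \<open>x = 1/2 - \<i>z\<close>.  Pascal's rule and binomial absorption give the three-term recurrence
  \<open>L\<^sub>n\<^sub>+\<^sub>2 = (2x - 1) L\<^sub>n\<^sub>+\<^sub>1 + (n + 1)\<^sup>2 L\<^sub>n\<close>.  The terminating \<open>\<^sub>3F\<^sub>2\<close> is
  \<open>G_n(y) = \<Sum>\<^sub>j A(n,j) (y)\<^sub>j / (1/2)\<^sub>j\<close> with \<open>A(n,j) = (-1)^j C(2j,j) C(n+j,2j)\<close>;
  a contiguity relation for \<open>A(n,j)\<close> in \<open>n\<close> shows that \<open>(-1)^n n! G_n(x/2)\<close> satisfies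
  the same recurrence with the same initial values, hence equals \<open>L_n(x)\<close>.
\<close>

lemma sum_Suc_choose_pascal:
  fixes g :: "nat \<Rightarrow> 'a::comm_ring_1"
  shows "(\<Sum>k\<le>Suc m. of_nat (Suc m choose k) * g k) = (\<Sum>k\<le>m. of_nat (m choose k) * (g k + g (Suc k)))"
proof -
  have shifted: "(\<Sum>k\<le>Suc m. of_nat (Suc m choose k) * g k)
      = g 0 + (\<Sum>k\<le>m. of_nat (m choose k) * g (Suc k)) + (\<Sum>k\<le>m. of_nat (m choose Suc k) * g (Suc k))"
    by (subst sum.atMost_Suc_shift) (simp add: sum.distrib distrib_right del: sum.atMost_Suc)
  have "(\<Sum>k\<le>m. of_nat (m choose k) * g k) = (\<Sum>k\<le>Suc m. of_nat (m choose k) * g k)"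
    by (simp add: binomial_eq_0)
  also have "\<dots> = g 0 + (\<Sum>k\<le>m. of_nat (m choose Suc k) * g (Suc k))"
    by (subst sum.atMost_Suc_shift) (simp del: sum.atMost_Suc)
  finally show ?thesis
    unfolding shifted by (simp add: sum.distrib distrib_left)
qed

lemma sum_Suc_choose_mult_index:
  fixes f :: "nat \<Rightarrow> 'a::comm_ring_1"
  shows "(\<Sum>k\<le>Suc p. of_nat (Suc p choose k) * of_nat k * f k)
       = of_nat (Suc p) * (\<Sum>k\<le>p. of_nat (p choose k) * f (Suc k))"
proof -
  have "(\<Sum>k\<le>Suc p. of_nat (Suc p choose k) * of_nat k * f k)
      = (\<Sum>k\<le>p. of_nat (Suc k * (Suc p choose Suc k)) * f (Suc k))"
    by (subst sum.atMost_Suc_shift) (simp add: algebra_simps del: sum.atMost_Suc binomial_Suc_Suc)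
  also have "\<dots> = (\<Sum>k\<le>p. of_nat (Suc p) * (of_nat (p choose k) * f (Suc k)))"
    by (simp only: Suc_times_binomial of_nat_mult mult.assoc)
  finally show ?thesis
    by (simp add: sum_distrib_left)
qed

lemma sum_Suc_choose_mult_compl_index:
  fixes f :: "nat \<Rightarrow> 'a::comm_ring_1"
  shows "(\<Sum>k\<le>Suc p. of_nat (Suc p choose k) * (of_nat (Suc p) - of_nat k) * f k)
       = of_nat (Suc p) * (\<Sum>k\<le>p. of_nat (p choose k) * f k)"
proof -
  have "(\<Sum>k\<le>Suc p. of_nat (Suc p choose k) * (of_nat (Suc p) - of_nat k) * f k)
      = (\<Sum>k\<le>p. of_nat ((Suc p - k) * (Suc p choose k)) * f k)"
    by (simp add: of_nat_diff mult_ac)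
  also have "\<dots> = (\<Sum>k\<le>p. of_nat (Suc p) * (of_nat (p choose k) * f k))"
    by (simp only: binomial_absorb_comp diff_Suc_1 of_nat_mult mult.assoc)
  finally show ?thesis
    by (simp add: sum_distrib_left)
qed

definition binomial_pochhammer_sum :: "nat \<Rightarrow> 'a::comm_ring_1 \<Rightarrow> 'a" where
  "binomial_pochhammer_sum n x = (\<Sum>k\<le>n. of_nat (n choose k) * pochhammer (x - of_nat k) n)"

lemma pochhammer_Suc_diff_Suc:
  fixes x :: "'a::comm_ring_1"
  shows "pochhammer (x - of_nat (Suc k)) (Suc n) = (x - of_nat (Suc k)) * pochhammer (x - of_nat k) n"
  by (simp add: pochhammer_rec algebra_simps)

lemma binomial_pochhammer_sum_Suc_Suc:
  "binomial_pochhammer_sum (Suc (Suc p)) x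
     = (2 * x - 1) * binomial_pochhammer_sum (Suc p) x + of_nat (Suc p)^2 * binomial_pochhammer_sum p x"
proof -
  define m where "m = Suc p"
  define f where "f k = pochhammer (x - of_nat k) m" for k
  have "binomial_pochhammer_sum (Suc m) x
      = (\<Sum>k\<le>m. of_nat (m choose k) * (pochhammer (x - of_nat k) (Suc m) + pochhammer (x - of_nat (Suc k)) (Suc m)))"
    unfolding binomial_pochhammer_sum_def by (rule sum_Suc_choose_pascal)
  also have "\<dots> = (\<Sum>k\<le>m. of_nat (m choose k) * f k * ((2 * x - 1) + (of_nat m - of_nat k) - of_nat k))"
    by (simp only: pochhammer_Suc_diff_Suc) (simp add: pochhammer_Suc f_def algebra_simps)
  also have "\<dots> = (2 * x - 1) * (\<Sum>k\<le>m. of_nat (m choose k) * f k)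
      + (\<Sum>k\<le>m. of_nat (m choose k) * (of_nat m - of_nat k) * f k) - (\<Sum>k\<le>m. of_nat (m choose k) * of_nat k * f k)"
    by (simp add: sum_distrib_left sum.distrib sum_subtractf algebra_simps)
  also have "\<dots> = (2 * x - 1) * binomial_pochhammer_sum m x
      + of_nat m * (\<Sum>k\<le>p. of_nat (p choose k) * (f k - f (Suc k)))"
    unfolding m_def sum_Suc_choose_mult_compl_index sum_Suc_choose_mult_index
    by (simp add: binomial_pochhammer_sum_def f_def m_def sum_subtractf algebra_simps)
  also have "(\<Sum>k\<le>p. of_nat (p choose k) * (f k - f (Suc k))) = of_nat m * binomial_pochhammer_sum p x"
    unfolding binomial_pochhammer_sum_def sum_distrib_left f_def m_def
    by (simp only: pochhammer_Suc_diff_Suc) (simp add: pochhammer_Suc algebra_simps)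
  finally show ?thesis
    by (simp add: m_def power2_eq_square algebra_simps)
qed

text \<open>\<open>hyp_coeff n j = (-n)\<^sub>j (n+1)\<^sub>j / (j!)\<^sup>2\<close>, written so that \<open>n\<close> occurs in a single
  binomial coefficient, to which Pascal's rule applies.\<close>

definition hyp_coeff :: "nat \<Rightarrow> nat \<Rightarrow> 'a::comm_ring_1" where
  "hyp_coeff n j = (-1)^j * of_nat ((2 * j) choose j) * of_nat ((n + j) choose (2 * j))"

lemma hyp_coeff_eq_0: "n < j \<Longrightarrow> hyp_coeff n j = 0"
  unfolding hyp_coeff_def by (simp add: binomial_eq_0)

lemma gbinomial_Suc_absorb:
  fixes a :: "'a::field_char_0"
  shows "of_nat (Suc k) * (a gchoose Suc k) = (a - of_nat k) * (a gchoose k)"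
  by (simp only: gbinomial_absorption gbinomial_absorb_comp)

lemma binomial_Suc_absorb:
  "(of_nat (Suc k) :: 'a::field_char_0) * of_nat (n choose Suc k) = (of_nat n - of_nat k) * of_nat (n choose k)"
  by (simp only: binomial_gbinomial gbinomial_Suc_absorb)

lemma Suc_times_central_binomial_Suc:
  "Suc i * ((2 * Suc i) choose Suc i) = 2 * (2 * i + 1) * ((2 * i) choose i)"
proof -
  have central: "Suc i * ((2 * Suc i) choose Suc i) = 2 * Suc i * (Suc (2 * i) choose Suc i)"
    using Suc_times_binomial[of i "Suc (2 * i)"] binomial_symmetric[of i "Suc (2 * i)"] by simp
  have odd: "Suc i * (Suc (2 * i) choose Suc i) = Suc (2 * i) * ((2 * i) choose i)"
    by (rule Suc_times_binomial)
  have "Suc i * (Suc i * ((2 * Suc i) choose Suc i)) = 2 * Suc i * (Suc i * (Suc (2 * i) choose Suc i))"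
    unfolding central by (simp only: mult_ac)
  also have "\<dots> = Suc i * (2 * (2 * i + 1) * ((2 * i) choose i))"
    unfolding odd by (simp only: mult_ac Suc_eq_plus1)
  finally show ?thesis
    using mult_left_cancel[of "Suc i"] by blast
qed

text \<open>In the application \<open>Q\<close> and \<open>D\<close> are the central binomials \<open>C(2i+2,i+1)\<close>, \<open>C(2i,i)\<close>
  and \<open>X, Y, Z\<close> are \<open>C(m+i,2i)\<close>, \<open>C(m+i,2i+1)\<close>, \<open>C(m+i,2i+2)\<close>.\<close>

lemma hyp_coeff_rec_identity:
  fixes Q D X Y Z :: "'a::field_char_0"
  assumes "(of_nat i + 1) * Q = 2 * (2 * of_nat i + 1) * D"
    and "(2 * of_nat i + 1) * Y = (of_nat m - of_nat i) * X"
    and "(2 * of_nat i + 2) * Z = (of_nat m - of_nat i - 1) * Y"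
  shows "(of_nat m + 1) * Q * (Z + 2 * Y + X)
       = (4 * of_nat i + 5) * Q * (Z + Y) + (4 * of_nat i + 2) * D * X + of_nat m * Q * Z"
proof -
  have "(of_nat i + 1) * ((of_nat m + 1) * Q * (Z + 2 * Y + X))
      = (of_nat i + 1) * ((4 * of_nat i + 5) * Q * (Z + Y) + (4 * of_nat i + 2) * D * X + of_nat m * Q * Z)"
    using assms by algebra
  moreover have "(of_nat i + 1 :: 'a) \<noteq> 0"
    using of_nat_neq_0[of i] by (simp add: add.commute)
  ultimately show ?thesis
    by simp
qed

lemma hyp_coeff_Suc_Suc_Suc:
  "of_nat (Suc (Suc p)) * hyp_coeff (Suc (Suc p)) (Suc i)
     = (4 * of_nat (Suc i) + 1) * hyp_coeff (Suc p) (Suc i) - (4 * of_nat (Suc i) - 2) * hyp_coeff (Suc p) i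
       + of_nat (Suc p) * (hyp_coeff p (Suc i) :: 'a::field_char_0)"
proof -
  define m where "m = Suc p"
  define N where "N = m + i"
  define s where "s = ((-1)^i :: 'a)"
  define Q where "Q = (of_nat ((2 * Suc i) choose Suc i) :: 'a)"
  define D where "D = (of_nat ((2 * i) choose i) :: 'a)"
  define X where "X = (of_nat (N choose (2 * i)) :: 'a)"
  define Y where "Y = (of_nat (N choose Suc (2 * i)) :: 'a)"
  define Z where "Z = (of_nat (N choose Suc (Suc (2 * i))) :: 'a)"
  have "(of_nat i + 1) * Q = 2 * (2 * of_nat i + 1) * D"
    unfolding Q_def D_def using arg_cong[OF Suc_times_central_binomial_Suc[of i], of "of_nat :: nat \<Rightarrow> 'a"]
    by (simp add: algebra_simps del: binomial_Suc_Suc)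
  moreover have "(2 * of_nat i + 1) * Y = (of_nat m - of_nat i) * X"
    using binomial_Suc_absorb[of "2 * i" N] unfolding X_def Y_def N_def by (simp add: algebra_simps)
  moreover have "(2 * of_nat i + 2) * Z = (of_nat m - of_nat i - 1) * Y"
    using binomial_Suc_absorb[of "Suc (2 * i)" N] unfolding Z_def Y_def N_def by (simp add: algebra_simps)
  ultimately have identity: "(of_nat m + 1) * Q * (Z + 2 * Y + X)
      = (4 * of_nat i + 5) * Q * (Z + Y) + (4 * of_nat i + 2) * D * X + of_nat m * Q * Z"
    by (rule hyp_coeff_rec_identity)
  have coeff: "hyp_coeff n (Suc i) = - s * Q * of_nat ((n + Suc i) choose Suc (Suc (2 * i)))" for n
    unfolding hyp_coeff_def s_def Q_def by simp
  have coeffs: "hyp_coeff (Suc m) (Suc i) = - s * Q * (Z + 2 * Y + X)"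
    "hyp_coeff m (Suc i) = - s * Q * (Z + Y)"
    "hyp_coeff p (Suc i) = - s * Q * Z"
    unfolding coeff X_def Y_def Z_def N_def by (simp_all add: m_def algebra_simps)
  have coeff_pred: "hyp_coeff m i = s * D * X"
    unfolding hyp_coeff_def s_def D_def X_def N_def by simp
  show ?thesis
    unfolding m_def[symmetric] coeffs coeff_pred
    using arg_cong[OF identity, of "\<lambda>t. - s * t"] by (simp add: algebra_simps)
qed

lemma hyp_coeff_Suc_Suc:
  "of_nat (Suc (Suc p)) * hyp_coeff (Suc (Suc p)) j
     = (4 * of_nat j + 1) * hyp_coeff (Suc p) j
       - (if j = 0 then 0 else (4 * of_nat j - 2) * hyp_coeff (Suc p) (j - 1))
       + of_nat (Suc p) * (hyp_coeff p j :: 'a::field_char_0)"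
  by (cases j) (simp add: hyp_coeff_def, simp add: hyp_coeff_Suc_Suc_Suc del: of_nat_Suc)

lemma sum_hyp_coeff_atMost_mono:
  "n \<le> N \<Longrightarrow> (\<Sum>j\<le>N. hyp_coeff n j * h j) = (\<Sum>j\<le>n. hyp_coeff n j * h j)"
  by (rule sum.mono_neutral_right) (auto simp: hyp_coeff_eq_0)

lemma pochhammer_half_neq_0: "pochhammer (1/2 :: 'a::field_char_0) j \<noteq> 0"
proof
  assume "pochhammer (1/2 :: 'a) j = 0"
  then obtain k where "(1/2 :: 'a) = - of_nat k"
    by (auto simp: pochhammer_eq_0_iff)
  then have "(of_nat (2 * k + 1) :: 'a) = 0"
    by (simp add: field_simps eq_neg_iff_add_eq_0 add.commute)
  then show False
    by (simp only: of_nat_eq_0_iff)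
qed

definition pochhammer_over_half :: "'a::field_char_0 \<Rightarrow> nat \<Rightarrow> 'a" where
  "pochhammer_over_half y j = pochhammer y j / pochhammer (1/2) j"

lemma pochhammer_over_half_Suc:
  "(2 * of_nat j + 1) * pochhammer_over_half y (Suc j) = 2 * (y + of_nat j) * pochhammer_over_half y j"
proof -
  define h :: 'a where "h = 1/2 + of_nat j"
  have "pochhammer (1/2 :: 'a) j \<noteq> 0" "h \<noteq> 0"
    using pochhammer_half_neq_0[where 'a='a, of "Suc j"] by (simp_all add: pochhammer_Suc h_def)
  moreover have "2 * of_nat j + 1 = 2 * h"
    by (simp add: h_def)
  ultimately show ?thesis
    unfolding pochhammer_over_half_def pochhammer_Suc h_def[symmetric] by (simp add: field_simps)
qed

definition hyp_poly :: "nat \<Rightarrow> 'a::field_char_0 \<Rightarrow> 'a" where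
  "hyp_poly n y = (\<Sum>j\<le>n. hyp_coeff n j * pochhammer_over_half y j)"

lemma hyp_poly_Suc_Suc:
  fixes y :: "'a::field_char_0"
  shows "of_nat (Suc (Suc p)) * hyp_poly (Suc (Suc p)) y = (1 - 4 * y) * hyp_poly (Suc p) y + of_nat (Suc p) * hyp_poly p y"
proof -
  define m where "m = Suc p"
  define B where "B = pochhammer_over_half y"
  define c where "c j = (if j = 0 then 0 else (4 * of_nat j - 2) * hyp_coeff m (j - 1) :: 'a)" for j
  have "of_nat (Suc m) * hyp_poly (Suc m) y = (\<Sum>j\<le>Suc m. (of_nat (Suc m) * hyp_coeff (Suc m) j) * B j)"
    unfolding hyp_poly_def B_def sum_distrib_left by (simp only: mult.assoc)
  also have "\<dots> = (\<Sum>j\<le>Suc m. ((4 * of_nat j + 1) * hyp_coeff m j - c j + of_nat m * hyp_coeff p j) * B j)"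
    unfolding m_def c_def hyp_coeff_Suc_Suc ..
  also have "\<dots> = (\<Sum>j\<le>Suc m. hyp_coeff m j * ((4 * of_nat j + 1) * B j)) - (\<Sum>j\<le>Suc m. c j * B j)
      + of_nat m * (\<Sum>j\<le>Suc m. hyp_coeff p j * B j)"
    by (simp add: sum.distrib sum_subtractf sum_distrib_left ring_distribs mult_ac del: sum.atMost_Suc)
  also have "(\<Sum>j\<le>Suc m. hyp_coeff m j * ((4 * of_nat j + 1) * B j)) = (\<Sum>j\<le>m. hyp_coeff m j * ((4 * of_nat j + 1) * B j))"
    by (rule sum_hyp_coeff_atMost_mono) simp
  also have "(\<Sum>j\<le>Suc m. hyp_coeff p j * B j) = hyp_poly p y"
    unfolding hyp_poly_def B_def by (rule sum_hyp_coeff_atMost_mono) (simp add: m_def)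
  also have "(\<Sum>j\<le>Suc m. c j * B j) = (\<Sum>j\<le>m. hyp_coeff m j * ((4 * of_nat j + 2) * B (Suc j)))"
    by (subst sum.atMost_Suc_shift) (simp add: c_def algebra_simps del: sum.atMost_Suc)
  also have "(\<Sum>j\<le>m. hyp_coeff m j * ((4 * of_nat j + 1) * B j)) - \<dots>
      = (\<Sum>j\<le>m. hyp_coeff m j * ((4 * of_nat j + 1) * B j - (4 * of_nat j + 2) * B (Suc j)))"
    by (simp add: sum_subtractf right_diff_distrib)
  also have "\<dots> = (\<Sum>j\<le>m. hyp_coeff m j * ((1 - 4 * y) * B j))"
  proof (rule sum.cong[OF refl])
    fix j
    have "(4 * of_nat j + 2) * B (Suc j) = 4 * (y + of_nat j) * B j"
      using arg_cong[OF pochhammer_over_half_Suc[of j y], of "(*) 2"] unfolding B_def by (simp add: algebra_simps)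
    then show "hyp_coeff m j * ((4 * of_nat j + 1) * B j - (4 * of_nat j + 2) * B (Suc j))
        = hyp_coeff m j * ((1 - 4 * y) * B j)"
      by (simp add: algebra_simps)
  qed
  also have "\<dots> = (1 - 4 * y) * hyp_poly m y"
    unfolding hyp_poly_def B_def by (simp add: sum_distrib_left mult_ac)
  finally show ?thesis
    by (simp only: m_def)
qed

lemma binomial_mult_binomial_add:
  "(n choose k) * ((n + k) choose k) = ((2 * k) choose k) * ((n + k) choose (2 * k))"
proof (cases "k \<le> n")
  case True
  then have "((n + k) choose (2 * k)) * ((2 * k) choose k) = ((n + k) choose k) * ((n + k - k) choose (2 * k - k))"
    by (intro choose_mult) auto
  then show ?thesis
    by (simp add: mult_2 mult.commute)
next
  case False
  then show ?thesis
    by (simp add: binomial_eq_0)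
qed

lemma pochhammer_minus_of_nat:
  "pochhammer (- of_nat n :: 'a::field_char_0) k = (-1)^k * fact k * of_nat (n choose k)"
proof -
  have "fact k * (of_nat n gchoose k) = (-1)^k * pochhammer (- of_nat n :: 'a) k"
    using gbinomial_pochhammer[of "of_nat n :: 'a" k] by (simp add: field_simps)
  then have "(-1)^k * (fact k * (of_nat n gchoose k)) = ((-1)^k * (-1)^k) * pochhammer (- of_nat n :: 'a) k"
    by (simp only: mult.assoc)
  then show ?thesis
    by (simp add: binomial_gbinomial mult.assoc)
qed

lemma pochhammer_of_nat_plus_1:
  "pochhammer (of_nat n + 1 :: 'a::field_char_0) k = fact k * of_nat ((n + k) choose k)"
  using gbinomial_pochhammer'[of "of_nat (n + k) :: 'a" k] by (simp add: binomial_gbinomial field_simps)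

lemma hyp3F2_term_eq:
  "pochhammer (- of_nat n) k * pochhammer (of_nat n + 1) k * pochhammer y k
     / (pochhammer (1/2) k * pochhammer 1 k) * 1 ^ k / of_nat (fact k)
   = hyp_coeff n k * pochhammer_over_half (y :: 'a::field_char_0) k"
proof -
  have "(of_nat (n choose k) :: 'a) * of_nat ((n + k) choose k)
      = of_nat ((2 * k) choose k) * of_nat ((n + k) choose (2 * k))"
    by (simp only: binomial_mult_binomial_add flip: of_nat_mult)
  then show ?thesis
    using pochhammer_half_neq_0[where 'a='a, of k]
    unfolding pochhammer_minus_of_nat pochhammer_of_nat_plus_1 pochhammer_fact[symmetric]
      hyp_coeff_def pochhammer_over_half_def
    by (simp add: field_simps)
qed

lemma hyp3F2_eq_hyp_poly: "hyp3F2 (- of_nat n) (of_nat n + 1) y (1/2) 1 1 = hyp_poly n y"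
proof -
  have "(\<lambda>k. hyp_coeff n k * pochhammer_over_half y k) sums hyp_poly n y"
    unfolding hyp_poly_def by (rule sums_finite) (auto simp: hyp_coeff_eq_0)
  then show ?thesis
    unfolding hyp3F2_def hyp3F2_term_eq by (simp add: sums_iff)
qed

lemma second_order_recurrence_unique:
  assumes "f 0 = g 0" "f 1 = g 1"
    and "\<And>n. f (Suc (Suc n)) = a n * f (Suc n) + b n * f n"
    and "\<And>n. g (Suc (Suc n)) = a n * g (Suc n) + b n * g n"
  shows "f n = g n"
  by (induction n rule: induct_nat_012) (simp_all add: assms flip: One_nat_def)

lemma binomial_pochhammer_sum_eq_hyp_poly:
  "binomial_pochhammer_sum n x = (-1)^n * fact n * hyp_poly n (x / 2 :: 'a::field_char_0)"
proof (rule second_order_recurrence_unique[where f = "\<lambda>n. binomial_pochhammer_sum n x"])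
  show "binomial_pochhammer_sum (Suc (Suc p)) x
      = (2 * x - 1) * binomial_pochhammer_sum (Suc p) x + of_nat (Suc p)^2 * binomial_pochhammer_sum p x" for p
    by (rule binomial_pochhammer_sum_Suc_Suc)
  show "(-1)^Suc (Suc p) * fact (Suc (Suc p)) * hyp_poly (Suc (Suc p)) (x / 2)
      = (2 * x - 1) * ((-1)^Suc p * fact (Suc p) * hyp_poly (Suc p) (x / 2))
        + of_nat (Suc p)^2 * ((-1)^p * fact p * hyp_poly p (x / 2))" for p
  proof -
    have "(-1)^Suc (Suc p) * fact (Suc (Suc p)) * hyp_poly (Suc (Suc p)) (x / 2)
        = (-1)^p * fact (Suc p) * (of_nat (Suc (Suc p)) * hyp_poly (Suc (Suc p)) (x / 2))"
      by (simp add: algebra_simps)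
    also have "\<dots> = (-1)^p * fact (Suc p) * ((1 - 4 * (x / 2)) * hyp_poly (Suc p) (x / 2) + of_nat (Suc p) * hyp_poly p (x / 2))"
      by (simp only: hyp_poly_Suc_Suc)
    finally show ?thesis
      by (simp add: algebra_simps power2_eq_square)
  qed
qed (simp_all add: binomial_pochhammer_sum_def hyp_poly_def hyp_coeff_def pochhammer_over_half_def numeral_2_eq_2)

theorem mainTheorem15:
  fixes n :: nat and z :: complex
  shows "P_weyl n z = of_nat (fact n) / (2 * \<i>) ^ n *
           hyp3F2 (- of_nat n) (of_nat n + 1) (1/4 - \<i> * z / 2) (1/2) 1 1"
proof -
  define x where "x = - \<i> * z + 1/2"
  have "P_weyl n z = \<i> ^ n / 2 ^ n * binomial_pochhammer_sum n x"
    unfolding P_weyl_def binomial_pochhammer_sum_def x_def by (simp add: atLeast0AtMost)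
  also have "\<dots> = fact n / (2 * \<i>) ^ n * hyp_poly n (x / 2)"
  proof -
    have "\<i> ^ n * (\<i> ^ n * (-1) ^ n) = (1 :: complex)"
      by (simp flip: power_mult_distrib)
    then show ?thesis
      unfolding binomial_pochhammer_sum_eq_hyp_poly by (simp add: power_mult_distrib field_simps)
  qed
  also have "x / 2 = 1/4 - \<i> * z / 2"
    unfolding x_def by (simp add: field_simps)
  finally show ?thesis
    by (simp add: hyp3F2_eq_hyp_poly)
qed

end
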